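(* If $\Delta;\Gamma\vdash M:A$ and $\Delta\vdash M\triangleright^*N$ in DCC, then $M^\circ\triangleright^*N^\circ$ in CC.
   Context: DCC: expressions $x\mid U_i\mid\Pi x{:}A.B\mid L@M\mid\ell_i\{\overline M\}$; label contexts $\Delta::=\cdot\mid\Delta,\ell_i(\{\overline x{:}\overline A\},x{:}A\mapsto L:B)$; substitution with $\ell\{\overline M\}[N/x]=\ell\{\overline{M[N/x]}\}$; reduction $\Delta\vdash\ell\{\overline M\}@N\triangleright L[\overline M/\overline x,N/x]$ when $\ell(\{\overline x{:}\overline A\},x{:}A\mapsto L:B)\in\Delta$, $\triangleright^*$ zero or more steps; typing $\Delta;\Gamma\vdash M:A$ by CC-style rules for variables, $U_i:U_{i+1}$, $\Pi$, application $M@N:B[N/x]$, conversion, plus: if $\Delta;\Gamma$ well formed, $\ell(\{\overline x{:}\overline A\},x{:}A\mapsto M:B)\in\Delta$, $|\overline M|=|\overline x|$, $\Delta;\Gamma\vdash M_k:A_k[M_1/x_1,\dots,M_{k-1}/x_{k-1}]$ for all $k$, then $\Delta;\Gamma\vdash\ell\{\overline M\}:\Pi x{:}A[\overline M/\overline x].B[\overline M/\overline x]$. CC: expressions $x\mid U_i\mid\Pi x{:}A.B\mid L\,M\mid\lambda x{:}A.M$, reduction $(\lambda x{:}A.N)\,M\triangleright N[M/x]$. Backward transformation (relative to $\Delta$, on well-typed terms): $x^\circ=x$, $U_i^\circ=U_i$, $(\Pi x{:}A.B)^\circ=\Pi x{:}A^\circ.B^\circ$, $(M@N)^\circ=M^\circ\,N^\circ$,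 $(\ell\{\overline M\})^\circ=\lambda x{:}A^\circ[\overline{M^\circ}/\overline x].\,L^\circ[\overline{M^\circ}/\overline x]$ where $\ell(\{\overline x{:}\overline A\},x{:}A\mapsto L:B)\in\Delta$. *)

theory Defs
  imports Main
begin

(* Variables are de Bruijn indices; labels are named by natural numbers
   (label \<ell>_i is DLab i). *)
datatype dtm =
    DVar nat
  | DU nat
  | DPi dtm dtm            (* \<Pi>x:A.B, B under one binder *)
  | DApp dtm dtm
  | DLab nat "dtm list"

primrec dlift :: "nat \<Rightarrow> dtm \<Rightarrow> dtm" where
  "dlift k (DVar i) = DVar (if i < k then i else Suc i)"
| "dlift k (DU n) = DU n"
| "dlift k (DPi A B) = DPi (dlift k A) (dlift (Suc k) B)"
| "dlift k (DApp M N) = DApp (dlift k M) (dlift k N)"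
| "dlift k (DLab l Ms) = DLab l (map (dlift k) Ms)"

definition dup :: "(nat \<Rightarrow> dtm) \<Rightarrow> nat \<Rightarrow> dtm" where
  "dup \<sigma> i = (case i of 0 \<Rightarrow> DVar 0 | Suc j \<Rightarrow> dlift 0 (\<sigma> j))"

primrec dsub :: "(nat \<Rightarrow> dtm) \<Rightarrow> dtm \<Rightarrow> dtm" where
  "dsub \<sigma> (DVar i) = \<sigma> i"
| "dsub \<sigma> (DU n) = DU n"
| "dsub \<sigma> (DPi A B) = DPi (dsub \<sigma> A) (dsub (dup \<sigma>) B)"
| "dsub \<sigma> (DApp M N) = DApp (dsub \<sigma> M) (dsub \<sigma> N)"
| "dsub \<sigma> (DLab l Ms) = DLab l (map (dsub \<sigma>) Ms)"

(* substitution of the list ts for the innermost length ts variables: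
   Var 0 := ts!0, ..., Var (n-1) := ts!(n-1), other variables shifted down *)
definition dinstf :: "dtm list \<Rightarrow> nat \<Rightarrow> dtm" where
  "dinstf ts i = (if i < length ts then ts ! i else DVar (i - length ts))"

definition dinst :: "dtm list \<Rightarrow> dtm \<Rightarrow> dtm" where
  "dinst ts = dsub (dinstf ts)"

definition dsubst1 :: "dtm \<Rightarrow> dtm \<Rightarrow> dtm" where
  "dsubst1 N B = dinst [N] B"

(* Label definitions \<ell>({x_1:A_1,...,x_k:A_k}, x:A \<mapsto> L : B).
   Telescope As = [A_1,...,A_k]; A_j lives under x_1..x_{j-1};
   A under x_1..x_k; L and B under x_1..x_k,x.  With de Bruijn indices,
   in L and B: Var 0 = x, Var 1 = x_k, ..., Var k = x_1. *)
type_synonym ldef = "dtm list \<times> dtm \<times> dtm \<times> dtm"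

(* label contexts: head = most recently added label *)
type_synonym lctx = "(nat \<times> ldef) list"

(* typing contexts: head = most recently bound variable *)
type_synonym tctx = "dtm list"

fun lookup :: "lctx \<Rightarrow> nat \<Rightarrow> (ldef \<times> lctx) option" where
  "lookup [] l = None"
| "lookup ((l', d) # \<Delta>) l = (if l = l' then Some (d, \<Delta>) else lookup \<Delta> l)"

fun dliftn :: "nat \<Rightarrow> dtm \<Rightarrow> dtm" where
  "dliftn 0 t = t"
| "dliftn (Suc n) t = dlift 0 (dliftn n t)"

inductive dstep :: "lctx \<Rightarrow> dtm \<Rightarrow> dtm \<Rightarrow> bool" where
  dbeta: "\<lbrakk>lookup \<Delta> l = Some ((As, A, L, B), \<Delta>'); length Ms = length As\<rbrakk>
          \<Longrightarrow> dstep \<Delta> (DApp (DLab l Ms) N) (dinst (N # rev Ms) L)"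
| dpi1: "dstep \<Delta> A A' \<Longrightarrow> dstep \<Delta> (DPi A B) (DPi A' B)"
| dpi2: "dstep \<Delta> B B' \<Longrightarrow> dstep \<Delta> (DPi A B) (DPi A B')"
| dapp1: "dstep \<Delta> M M' \<Longrightarrow> dstep \<Delta> (DApp M N) (DApp M' N)"
| dapp2: "dstep \<Delta> N N' \<Longrightarrow> dstep \<Delta> (DApp M N) (DApp M N')"
| dlab: "\<lbrakk>i < length Ms; dstep \<Delta> (Ms ! i) M'\<rbrakk>
          \<Longrightarrow> dstep \<Delta> (DLab l Ms) (DLab l (Ms[i := M']))"

abbreviation dsteps :: "lctx \<Rightarrow> dtm \<Rightarrow> dtm \<Rightarrow> bool" where
  "dsteps \<Delta> \<equiv> (dstep \<Delta>)\<^sup>*\<^sup>*"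

definition dconv :: "lctx \<Rightarrow> dtm \<Rightarrow> dtm \<Rightarrow> bool" where
  "dconv \<Delta> = (\<lambda>A B. dstep \<Delta> A B \<or> dstep \<Delta> B A)\<^sup>*\<^sup>*"

inductive wfL :: "lctx \<Rightarrow> bool"
  and wfC :: "lctx \<Rightarrow> tctx \<Rightarrow> bool"
  and dtyp :: "lctx \<Rightarrow> tctx \<Rightarrow> dtm \<Rightarrow> dtm \<Rightarrow> bool" where
  wfL_nil: "wfL []"
| wfL_cons: "\<lbrakk>wfL \<Delta>; lookup \<Delta> l = None; dtyp \<Delta> (A # rev As) L B\<rbrakk>
             \<Longrightarrow> wfL ((l, (As, A, L, B)) # \<Delta>)"
| wfC_nil: "wfL \<Delta> \<Longrightarrow> wfC \<Delta> []"
| wfC_cons: "dtyp \<Delta> \<Gamma> A (DU i) \<Longrightarrow> wfC \<Delta> (A # \<Gamma>)"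
| t_var: "\<lbrakk>wfC \<Delta> \<Gamma>; i < length \<Gamma>\<rbrakk> \<Longrightarrow> dtyp \<Delta> \<Gamma> (DVar i) (dliftn (Suc i) (\<Gamma> ! i))"
| t_univ: "wfC \<Delta> \<Gamma> \<Longrightarrow> dtyp \<Delta> \<Gamma> (DU i) (DU (Suc i))"
| t_pi: "\<lbrakk>dtyp \<Delta> \<Gamma> A (DU i); dtyp \<Delta> (A # \<Gamma>) B (DU j)\<rbrakk>
         \<Longrightarrow> dtyp \<Delta> \<Gamma> (DPi A B) (DU (max i j))"
| t_app: "\<lbrakk>dtyp \<Delta> \<Gamma> M (DPi A B); dtyp \<Delta> \<Gamma> N A\<rbrakk>
          \<Longrightarrow> dtyp \<Delta> \<Gamma> (DApp M N) (dsubst1 N B)"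
| t_conv: "\<lbrakk>dtyp \<Delta> \<Gamma> M A; dtyp \<Delta> \<Gamma> B (DU i); dconv \<Delta> A B\<rbrakk>
           \<Longrightarrow> dtyp \<Delta> \<Gamma> M B"
| t_lab: "\<lbrakk>wfC \<Delta> \<Gamma>; lookup \<Delta> l = Some ((As, A, L, B), \<Delta>');
           length Ms = length As;
           \<forall>k < length As. dtyp \<Delta> \<Gamma> (Ms ! k) (dinst (rev (take k Ms)) (As ! k))\<rbrakk>
          \<Longrightarrow> dtyp \<Delta> \<Gamma> (DLab l Ms)
                (DPi (dinst (rev Ms) A) (dsub (dup (dinstf (rev Ms))) B))"

datatype ctm =
    CVar nat
  | CU nat
  | CPi ctm ctm
  | CApp ctm ctm
  | CLam ctm ctm           (* \<lambda>x:A.M, M under one binder *)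

primrec clift :: "nat \<Rightarrow> ctm \<Rightarrow> ctm" where
  "clift k (CVar i) = CVar (if i < k then i else Suc i)"
| "clift k (CU n) = CU n"
| "clift k (CPi A B) = CPi (clift k A) (clift (Suc k) B)"
| "clift k (CApp M N) = CApp (clift k M) (clift k N)"
| "clift k (CLam A M) = CLam (clift k A) (clift (Suc k) M)"

definition cup :: "(nat \<Rightarrow> ctm) \<Rightarrow> nat \<Rightarrow> ctm" where
  "cup \<sigma> i = (case i of 0 \<Rightarrow> CVar 0 | Suc j \<Rightarrow> clift 0 (\<sigma> j))"

primrec csub :: "(nat \<Rightarrow> ctm) \<Rightarrow> ctm \<Rightarrow> ctm" where
  "csub \<sigma> (CVar i) = \<sigma> i"
| "csub \<sigma> (CU n) = CU n"
| "csub \<sigma> (CPi A B) = CPi (csub \<sigma> A) (csub (cup \<sigma>) B)"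
| "csub \<sigma> (CApp M N) = CApp (csub \<sigma> M) (csub \<sigma> N)"
| "csub \<sigma> (CLam A M) = CLam (csub \<sigma> A) (csub (cup \<sigma>) M)"

definition cinstf :: "ctm list \<Rightarrow> nat \<Rightarrow> ctm" where
  "cinstf ts i = (if i < length ts then ts ! i else CVar (i - length ts))"

definition cinst :: "ctm list \<Rightarrow> ctm \<Rightarrow> ctm" where
  "cinst ts = csub (cinstf ts)"

inductive cstep :: "ctm \<Rightarrow> ctm \<Rightarrow> bool" where
  cbeta: "cstep (CApp (CLam A N) M) (cinst [M] N)"
| cpi1: "cstep A A' \<Longrightarrow> cstep (CPi A B) (CPi A' B)"
| cpi2: "cstep B B' \<Longrightarrow> cstep (CPi A B) (CPi A B')"
| capp1: "cstep M M' \<Longrightarrow> cstep (CApp M N) (CApp M' N)"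
| capp2: "cstep N N' \<Longrightarrow> cstep (CApp M N) (CApp M N')"
| clam1: "cstep A A' \<Longrightarrow> cstep (CLam A M) (CLam A' M)"
| clam2: "cstep M M' \<Longrightarrow> cstep (CLam A M) (CLam A M')"

abbreviation csteps :: "ctm \<Rightarrow> ctm \<Rightarrow> bool" where
  "csteps \<equiv> cstep\<^sup>*\<^sup>*"

lemma lookup_shorter: "lookup \<Delta> l = Some (d, \<Delta>') \<Longrightarrow> length \<Delta>' < length \<Delta>"
  by (induction \<Delta> l rule: lookup.induct) (auto split: if_splits)

(* The bodies A, L of a label are translated relative to the label context in
   which the label was defined (the part of \<Delta> preceding it); for well-formed
   \<Delta> this is the same as translating them relative to \<Delta>.  Unknown labels
   (impossible for well-typed terms) are mapped to an arbitrary term. *)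
function bt :: "lctx \<Rightarrow> dtm \<Rightarrow> ctm" where
  "bt \<Delta> (DVar i) = CVar i"
| "bt \<Delta> (DU i) = CU i"
| "bt \<Delta> (DPi A B) = CPi (bt \<Delta> A) (bt \<Delta> B)"
| "bt \<Delta> (DApp M N) = CApp (bt \<Delta> M) (bt \<Delta> N)"
| "bt \<Delta> (DLab l Ms) =
     (case lookup \<Delta> l of
        None \<Rightarrow> CU 0
      | Some ((As, A, L, B), \<Delta>') \<Rightarrow>
          (let ts = rev (map (bt \<Delta>) Ms)
           in CLam (cinst ts (bt \<Delta>' A)) (csub (cup (cinstf ts)) (bt \<Delta>' L))))"
  by pat_completeness auto
termination
  apply (relation "measures [\<lambda>(\<Delta>, t). length \<Delta>, \<lambda>(\<Delta>, t). size t]")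
  apply (auto dest: lookup_shorter simp: size_list_estimation' less_Suc_eq_le)
  done

end

theory Submission imports Defs begin

text \<open>
  The translation commutes with lifting and substitution.  For a label this needs that the
  bodies \<open>A\<close> and \<open>L\<close> mention only the variables of the telescope, which holds because they
  are typed when the label is added to a well-formed label context.  Consequently the
  \<open>\<delta>\<close>-step \<open>\<ell>{Ms} @ N \<triangleright> L[Ms/xs, N/x]\<close> becomes the \<open>\<beta>\<close>-step
  \<open>(\<lambda>x:A\<degree>[Ms\<degree>/xs]. L\<degree>[Ms\<degree>/xs]) N\<degree> \<triangleright> L\<degree>[Ms\<degree>/xs, N\<degree>/x]\<close>, a step inside a label argument
  becomes reduction under the \<open>\<lambda>\<close>, and the other congruence steps are mapped to themselves.
  Typing is used only to know that every label occurring in the term is defined with the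
  right arity, an invariant preserved by reduction.
\<close>

lemma rtranclp_map_step:
  assumes "\<And>x y. r x y \<Longrightarrow> s (f x) (f y)" and "r\<^sup>*\<^sup>* x y"
  shows "s\<^sup>*\<^sup>* (f x) (f y)"
  using assms(2) by (induction rule: rtranclp_induct) (auto intro: rtranclp.rtrancl_into_rtrancl assms(1))

definition rup :: "(nat \<Rightarrow> nat) \<Rightarrow> nat \<Rightarrow> nat" where
  "rup r i = (case i of 0 \<Rightarrow> 0 | Suc j \<Rightarrow> Suc (r j))"

primrec crename :: "(nat \<Rightarrow> nat) \<Rightarrow> ctm \<Rightarrow> ctm" where
  "crename r (CVar i) = CVar (r i)"
| "crename r (CU n) = CU n"
| "crename r (CPi A B) = CPi (crename r A) (crename (rup r) B)"
| "crename r (CApp M N) = CApp (crename r M) (crename r N)"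
| "crename r (CLam A M) = CLam (crename r A) (crename (rup r) M)"

primrec cclosed :: "nat \<Rightarrow> ctm \<Rightarrow> bool" where
  "cclosed n (CVar i) = (i < n)"
| "cclosed n (CU m) = True"
| "cclosed n (CPi A B) = (cclosed n A \<and> cclosed (Suc n) B)"
| "cclosed n (CApp M N) = (cclosed n M \<and> cclosed n N)"
| "cclosed n (CLam A M) = (cclosed n A \<and> cclosed (Suc n) M)"

lemma clift_eq_crename: "clift k t = crename (\<lambda>i. if i < k then i else Suc i) t"
proof -
  have "rup (\<lambda>i. if i < k then i else Suc i) = (\<lambda>i. if i < Suc k then i else Suc i)" for k
    by (auto simp: rup_def split: nat.splits)
  then show ?thesis by (induction t arbitrary: k) auto
qed

lemma clift0_eq_crename: "clift 0 t = crename Suc t"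
  by (simp add: clift_eq_crename)

lemma crename_eq_csub: "crename r t = csub (\<lambda>i. CVar (r i)) t"
proof -
  have "cup (\<lambda>i. CVar (r i)) = (\<lambda>i. CVar (rup r i))" for r
    by (auto simp: cup_def rup_def split: nat.splits)
  then show ?thesis by (induction t arbitrary: r) auto
qed

lemma csub_crename: "csub \<sigma> (crename r t) = csub (\<lambda>i. \<sigma> (r i)) t"
proof -
  have "(\<lambda>i. cup \<sigma> (rup r i)) = cup (\<lambda>i. \<sigma> (r i))" for \<sigma> r
    by (auto simp: cup_def rup_def split: nat.splits)
  then show ?thesis by (induction t arbitrary: \<sigma> r) auto
qed

lemma crename_crename: "crename r (crename s t) = crename (\<lambda>i. r (s i)) t"
  by (simp only: crename_eq_csub[of r] crename_eq_csub[of "\<lambda>i. r (s i)"] csub_crename)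

lemma crename_csub: "crename r (csub \<sigma> t) = csub (\<lambda>i. crename r (\<sigma> i)) t"
proof -
  have "(\<lambda>i. crename (rup r) (cup \<sigma> i)) = cup (\<lambda>i. crename r (\<sigma> i))" for \<sigma> r
    by (auto simp: cup_def rup_def clift0_eq_crename crename_crename split: nat.splits)
  then show ?thesis by (induction t arbitrary: \<sigma> r) auto
qed

lemma csub_cup_clift0: "csub (cup \<sigma>) (clift 0 t) = clift 0 (csub \<sigma> t)"
  by (simp add: clift0_eq_crename csub_crename crename_csub cup_def)

lemma csub_csub: "csub \<sigma> (csub \<tau> t) = csub (\<lambda>i. csub \<sigma> (\<tau> i)) t"
proof -
  have "(\<lambda>i. csub (cup \<sigma>) (cup \<tau> i)) = cup (\<lambda>i. csub \<sigma> (\<tau> i))" for \<sigma> \<tau>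
    by (auto simp: cup_def csub_cup_clift0 split: nat.splits)
  then show ?thesis by (induction t arbitrary: \<sigma> \<tau>) auto
qed

lemma csub_CVar: "csub CVar t = t"
proof -
  have "cup CVar = CVar"
    by (auto simp: cup_def split: nat.splits)
  then show ?thesis by (induction t) auto
qed

lemma cinst_Cons: "cinst [u] (csub (cup (cinstf ts)) t) = cinst (u # ts) t"
proof -
  have "csub (cinstf [u]) (cup (cinstf ts) i) = cinstf (u # ts) i" for i
    by (cases i) (auto simp: cup_def clift0_eq_crename csub_crename cinstf_def csub_CVar)
  then show ?thesis by (simp add: cinst_def csub_csub)
qed

lemma csub_cong_cclosed: "cclosed n t \<Longrightarrow> \<forall>i<n. \<sigma> i = \<tau> i \<Longrightarrow> csub \<sigma> t = csub \<tau> t"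
proof (induction t arbitrary: n \<sigma> \<tau>)
  case (CPi A B)
  have "\<forall>i<Suc n. cup \<sigma> i = cup \<tau> i"
    using CPi.prems(2) by (auto simp: cup_def split: nat.splits)
  with CPi show ?case by auto
next
  case (CLam A M)
  have "\<forall>i<Suc n. cup \<sigma> i = cup \<tau> i"
    using CLam.prems(2) by (auto simp: cup_def split: nat.splits)
  with CLam show ?case by auto
qed auto

lemma cclosed_crename: "cclosed n t \<Longrightarrow> \<forall>i<n. r i < m \<Longrightarrow> cclosed m (crename r t)"
proof (induction t arbitrary: n m r)
  case (CPi A B)
  have "\<forall>i<Suc n. rup r i < Suc m"
    using CPi.prems(2) by (auto simp: rup_def split: nat.splits)
  with CPi show ?case by auto
next
  case (CLam A M)
  have "\<forall>i<Suc n. rup r i < Suc m"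
    using CLam.prems(2) by (auto simp: rup_def split: nat.splits)
  with CLam show ?case by auto
qed auto

lemma cclosed_clift0: "cclosed n t \<Longrightarrow> cclosed (Suc n) (clift 0 t)"
  by (simp add: clift0_eq_crename cclosed_crename)

lemma cclosed_csub: "cclosed m t \<Longrightarrow> \<forall>i<m. cclosed n (\<sigma> i) \<Longrightarrow> cclosed n (csub \<sigma> t)"
proof (induction t arbitrary: m n \<sigma>)
  case (CPi A B)
  have "\<forall>i<Suc m. cclosed (Suc n) (cup \<sigma> i)"
    using CPi.prems(2) by (auto simp: cup_def cclosed_clift0 split: nat.splits)
  with CPi show ?case by auto
next
  case (CLam A M)
  have "\<forall>i<Suc m. cclosed (Suc n) (cup \<sigma> i)"
    using CLam.prems(2) by (auto simp: cup_def cclosed_clift0 split: nat.splits)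
  with CLam show ?case by auto
qed auto

lemma cclosed_cinst:
  "cclosed (length ts) t \<Longrightarrow> \<forall>u\<in>set ts. cclosed n u \<Longrightarrow> cclosed n (cinst ts t)"
  unfolding cinst_def by (erule cclosed_csub) (simp add: cinstf_def)

lemma cclosed_csub_cup_cinstf:
  "cclosed (Suc (length ts)) t \<Longrightarrow> \<forall>u\<in>set ts. cclosed n u \<Longrightarrow>
   cclosed (Suc n) (csub (cup (cinstf ts)) t)"
  by (erule cclosed_csub) (auto simp: cinstf_def cup_def cclosed_clift0 split: nat.splits)

lemma csub_cinst_cclosed:
  "cclosed (length ts) t \<Longrightarrow> csub \<sigma> (cinst ts t) = cinst (map (csub \<sigma>) ts) t"
  unfolding cinst_def csub_csub by (erule csub_cong_cclosed) (simp add: cinstf_def)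

lemma csub_cup_cinstf_cclosed:
  "cclosed (Suc (length ts)) t \<Longrightarrow>
   csub (cup \<sigma>) (csub (cup (cinstf ts)) t) = csub (cup (cinstf (map (csub \<sigma>) ts))) t"
  unfolding csub_csub
  by (erule csub_cong_cclosed) (auto simp: cinstf_def cup_def csub_cup_clift0 split: nat.splits)

lemma cstep_crename: "cstep t u \<Longrightarrow> cstep (crename r t) (crename r u)"
proof (induction arbitrary: r rule: cstep.induct)
  case (cbeta A N M)
  have "(\<lambda>i. crename r (cinstf [M] i)) = (\<lambda>i. cinstf [crename r M] (rup r i))"
    by (auto simp: cinstf_def rup_def split: nat.splits)
  then have "crename r (cinst [M] N) = cinst [crename r M] (crename (rup r) N)"
    by (simp add: cinst_def crename_csub csub_crename)
  then show ?case by (simp add: cstep.cbeta)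
qed (auto intro: cstep.intros)

lemma csteps_clift0: "csteps t u \<Longrightarrow> csteps (clift 0 t) (clift 0 u)"
  unfolding clift0_eq_crename by (rule rtranclp_map_step) (rule cstep_crename)

lemma csteps_CPi: "csteps A A' \<Longrightarrow> csteps B B' \<Longrightarrow> csteps (CPi A B) (CPi A' B')"
  using rtranclp_map_step[of cstep cstep "\<lambda>A. CPi A B"] rtranclp_map_step[of cstep cstep "CPi A'"]
  by (meson cpi1 cpi2 rtranclp_trans)

lemma csteps_CApp: "csteps M M' \<Longrightarrow> csteps N N' \<Longrightarrow> csteps (CApp M N) (CApp M' N')"
  using rtranclp_map_step[of cstep cstep "\<lambda>M. CApp M N"] rtranclp_map_step[of cstep cstep "CApp M'"]
  by (meson capp1 capp2 rtranclp_trans)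

lemma csteps_CLam: "csteps A A' \<Longrightarrow> csteps M M' \<Longrightarrow> csteps (CLam A M) (CLam A' M')"
  using rtranclp_map_step[of cstep cstep "\<lambda>A. CLam A M"] rtranclp_map_step[of cstep cstep "CLam A'"]
  by (meson clam1 clam2 rtranclp_trans)

lemma csteps_cup: "(\<And>i. csteps (\<sigma> i) (\<tau> i)) \<Longrightarrow> csteps (cup \<sigma> i) (cup \<tau> i)"
  by (auto simp: cup_def csteps_clift0 split: nat.splits)

lemma csteps_csub: "(\<And>i. csteps (\<sigma> i) (\<tau> i)) \<Longrightarrow> csteps (csub \<sigma> t) (csub \<tau> t)"
proof (induction t arbitrary: \<sigma> \<tau>)
  case (CPi A B)
  then show ?case by (simp add: csteps_CPi csteps_cup)
next
  case (CApp M N)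
  then show ?case by (simp add: csteps_CApp)
next
  case (CLam A M)
  then show ?case by (simp add: csteps_CLam csteps_cup)
qed auto

lemma csteps_cinstf: "list_all2 csteps ts ts' \<Longrightarrow> csteps (cinstf ts i) (cinstf ts' i)"
  by (auto simp: cinstf_def list_all2_lengthD list_all2_nthD)

fun labels_ok :: "lctx \<Rightarrow> dtm \<Rightarrow> bool" where
  "labels_ok \<Delta> (DVar i) = True"
| "labels_ok \<Delta> (DU i) = True"
| "labels_ok \<Delta> (DPi A B) = (labels_ok \<Delta> A \<and> labels_ok \<Delta> B)"
| "labels_ok \<Delta> (DApp M N) = (labels_ok \<Delta> M \<and> labels_ok \<Delta> N)"
| "labels_ok \<Delta> (DLab l Ms) =
     ((case lookup \<Delta> l of None \<Rightarrow> False | Some (d, \<Delta>') \<Rightarrow> length Ms = length (fst d))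
      \<and> (\<forall>M\<in>set Ms. labels_ok \<Delta> M))"

fun dclosed :: "nat \<Rightarrow> dtm \<Rightarrow> bool" where
  "dclosed n (DVar i) = (i < n)"
| "dclosed n (DU i) = True"
| "dclosed n (DPi A B) = (dclosed n A \<and> dclosed (Suc n) B)"
| "dclosed n (DApp M N) = (dclosed n M \<and> dclosed n N)"
| "dclosed n (DLab l Ms) = (\<forall>M\<in>set Ms. dclosed n M)"

lemma dtyp_dclosed_labels_ok:
  "dtyp \<Delta> \<Gamma> M T \<Longrightarrow> wfL \<Delta> \<and> wfC \<Delta> \<Gamma> \<and> dclosed (length \<Gamma>) M \<and> labels_ok \<Delta> M"
proof (induction rule: wfL_wfC_dtyp.inducts(3)[where ?P1.0 = "\<lambda>_. True" and ?P2.0 = "\<lambda>\<Delta> _. wfL \<Delta>"])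
  case (t_lab \<Delta> \<Gamma> l As A L B \<Delta>' Ms)
  have "\<forall>M\<in>set Ms. dclosed (length \<Gamma>) M \<and> labels_ok \<Delta> M"
    using t_lab by (auto simp: in_set_conv_nth)
  with t_lab show ?case by auto
qed auto

lemma wfL_ConsD:
  assumes "wfL ((l, (As, A, L, B)) # \<Delta>)"
  shows "wfL \<Delta> \<and> dclosed (length As) A \<and> labels_ok \<Delta> A
    \<and> dclosed (Suc (length As)) L \<and> labels_ok \<Delta> L"
proof -
  from assms have "wfL \<Delta>" and L: "dtyp \<Delta> (A # rev As) L B"
    by (auto elim: wfL.cases)
  from dtyp_dclosed_labels_ok[OF L] obtain i where "dtyp \<Delta> (rev As) A (DU i)"
    by (auto elim: wfC.cases)
  with \<open>wfL \<Delta>\<close> dtyp_dclosed_labels_ok[OF L] dtyp_dclosed_labels_ok[OF this] show ?thesis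
    by simp
qed

lemma lookup_wfL:
  "wfL \<Delta> \<Longrightarrow> lookup \<Delta> l = Some (d, \<Delta>') \<Longrightarrow> wfL ((l, d) # \<Delta>') \<and> lookup \<Delta>' \<subseteq>\<^sub>m lookup \<Delta>"
proof (induction \<Delta>)
  case (Cons p \<Delta>0)
  obtain l0 As0 A0 L0 B0 where p: "p = (l0, (As0, A0, L0, B0))"
    by (metis prod.exhaust)
  from Cons.prems(1) have "wfL \<Delta>0" and "lookup \<Delta>0 l0 = None"
    by (auto simp: p elim: wfL.cases)
  then have extends: "lookup \<Delta>0 \<subseteq>\<^sub>m lookup (p # \<Delta>0)"
    by (auto simp: map_le_def dom_def p)
  show ?case
  proof (cases "l = l0")
    case True
    with Cons.prems(2) have "p = (l, d)" and "\<Delta>' = \<Delta>0"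
      by (auto simp: p)
    with Cons.prems(1) extends show ?thesis by blast
  next
    case False
    with Cons.prems(2) have "lookup \<Delta>0 l = Some (d, \<Delta>')"
      by (simp add: p)
    with Cons.IH \<open>wfL \<Delta>0\<close> extends show ?thesis
      by (blast intro: map_le_trans)
  qed
qed simp

lemma wfL_lookup_body:
  assumes "wfL \<Delta>" and "lookup \<Delta> l = Some ((As, A, L, B), \<Delta>')"
  shows "wfL \<Delta>'" and "lookup \<Delta>' \<subseteq>\<^sub>m lookup \<Delta>"
    and "dclosed (length As) A" and "labels_ok \<Delta>' A"
    and "dclosed (Suc (length As)) L" and "labels_ok \<Delta>' L"
  using lookup_wfL[OF assms] wfL_ConsD by blast+

lemma labels_ok_map_le: "lookup \<Delta>1 \<subseteq>\<^sub>m lookup \<Delta>2 \<Longrightarrow> labels_ok \<Delta>1 t \<Longrightarrow> labels_ok \<Delta>2 t"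
  by (induction t) (auto simp: map_le_def dom_def split: option.splits)

lemma bt_map_le: "lookup \<Delta>1 \<subseteq>\<^sub>m lookup \<Delta>2 \<Longrightarrow> labels_ok \<Delta>1 t \<Longrightarrow> bt \<Delta>2 t = bt \<Delta>1 t"
proof (induction t)
  case (DLab l Ms)
  then obtain x where "lookup \<Delta>1 l = Some x" and "lookup \<Delta>2 l = Some x"
    by (auto simp: map_le_def dom_def split: option.splits)
  moreover have "map (bt \<Delta>2) Ms = map (bt \<Delta>1) Ms"
    using DLab by auto
  ultimately show ?case by (simp del: map_eq_conv split: prod.splits)
qed auto

lemma labels_ok_dlift: "labels_ok \<Delta> (dlift k t) = labels_ok \<Delta> t"
  by (induction t arbitrary: k) (auto split: option.splits)

lemma labels_ok_dsub: "labels_ok \<Delta> t \<Longrightarrow> \<forall>i. labels_ok \<Delta> (\<sigma> i) \<Longrightarrow> labels_ok \<Delta> (dsub \<sigma> t)"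
proof (induction t arbitrary: \<sigma>)
  case (DPi A B)
  have "\<forall>i. labels_ok \<Delta> (dup \<sigma> i)"
    using DPi.prems by (auto simp: dup_def labels_ok_dlift split: nat.splits)
  with DPi show ?case by auto
qed (auto split: option.splits)

lemma labels_ok_dinst:
  "labels_ok \<Delta> t \<Longrightarrow> \<forall>u\<in>set ts. labels_ok \<Delta> u \<Longrightarrow> labels_ok \<Delta> (dinst ts t)"
  unfolding dinst_def by (erule labels_ok_dsub) (simp add: dinstf_def)

lemma bt_cclosed: "wfL \<Delta> \<Longrightarrow> labels_ok \<Delta> t \<Longrightarrow> dclosed n t \<Longrightarrow> cclosed n (bt \<Delta> t)"
proof (induction \<Delta> t arbitrary: n rule: bt.induct)
  case (5 \<Delta> l Ms)
  from "5.prems"(2) obtain As A L B \<Delta>' where lk: "lookup \<Delta> l = Some ((As, A, L, B), \<Delta>')"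
    and len: "length Ms = length As"
    by (auto split: option.splits)
  note body = wfL_lookup_body[OF "5.prems"(1) lk]
  define ts where "ts = rev (map (bt \<Delta>) Ms)"
  have "\<forall>u\<in>set ts. cclosed n u"
    using "5.IH"(1)[OF lk refl refl refl refl] "5.prems" by (auto simp: ts_def)
  moreover have "length ts = length As"
    by (simp add: ts_def len)
  moreover note "5.IH"(2,3)[OF lk refl refl refl refl refl]
  ultimately show ?case
    using lk body by (simp add: ts_def[symmetric] cclosed_cinst cclosed_csub_cup_cinstf)
qed auto

lemma bt_DLab_csub:
  assumes "wfL \<Delta>" and "labels_ok \<Delta> (DLab l Ms)"
    and "map (bt \<Delta>) Ms' = map (csub \<tau>) (map (bt \<Delta>) Ms)"
  shows "bt \<Delta> (DLab l Ms') = csub \<tau> (bt \<Delta> (DLab l Ms))"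
proof -
  from assms(2) obtain As A L B \<Delta>' where lk: "lookup \<Delta> l = Some ((As, A, L, B), \<Delta>')"
    and len: "length Ms = length As"
    by (auto split: option.splits)
  note body = wfL_lookup_body[OF assms(1) lk]
  define ts where "ts = rev (map (bt \<Delta>) Ms)"
  have lts: "length ts = length As"
    by (simp add: ts_def len)
  have "rev (map (bt \<Delta>) Ms') = map (csub \<tau>) ts"
    by (simp add: ts_def assms(3) rev_map)
  then have "bt \<Delta> (DLab l Ms') = CLam (cinst (map (csub \<tau>) ts) (bt \<Delta>' A))
      (csub (cup (cinstf (map (csub \<tau>) ts))) (bt \<Delta>' L))"
    using lk by (simp add: Let_def)
  also have "\<dots> = CLam (csub \<tau> (cinst ts (bt \<Delta>' A)))
      (csub (cup \<tau>) (csub (cup (cinstf ts)) (bt \<Delta>' L)))"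
    using bt_cclosed[of \<Delta>' A] bt_cclosed[of \<Delta>' L] body lts
    by (simp add: csub_cinst_cclosed csub_cup_cinstf_cclosed)
  also have "\<dots> = csub \<tau> (bt \<Delta> (DLab l Ms))"
    using lk by (simp add: ts_def Let_def)
  finally show ?thesis .
qed

lemma bt_dlift: "wfL \<Delta> \<Longrightarrow> labels_ok \<Delta> t \<Longrightarrow> bt \<Delta> (dlift k t) = clift k (bt \<Delta> t)"
proof (induction t arbitrary: k)
  case (DLab l Ms)
  have "map (bt \<Delta>) (map (dlift k) Ms)
      = map (csub (\<lambda>i. CVar (if i < k then i else Suc i))) (map (bt \<Delta>) Ms)"
    using DLab by (simp add: clift_eq_crename crename_eq_csub)
  from bt_DLab_csub[OF DLab.prems this] show ?case
    by (simp add: clift_eq_crename crename_eq_csub)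
qed auto

lemma bt_dsub:
  "wfL \<Delta> \<Longrightarrow> labels_ok \<Delta> t \<Longrightarrow> \<forall>i. labels_ok \<Delta> (\<sigma> i) \<Longrightarrow>
   bt \<Delta> (dsub \<sigma> t) = csub (\<lambda>i. bt \<Delta> (\<sigma> i)) (bt \<Delta> t)"
proof (induction t arbitrary: \<sigma>)
  case (DPi A B)
  have "\<forall>i. labels_ok \<Delta> (dup \<sigma> i)"
    using DPi.prems by (auto simp: dup_def labels_ok_dlift split: nat.splits)
  moreover have "(\<lambda>i. bt \<Delta> (dup \<sigma> i)) = cup (\<lambda>i. bt \<Delta> (\<sigma> i))"
    using DPi.prems by (auto simp: dup_def cup_def bt_dlift split: nat.splits)
  ultimately show ?case
    using DPi by simp
next
  case (DLab l Ms)
  have "map (bt \<Delta>) (map (dsub \<sigma>) Ms) = map (csub (\<lambda>i. bt \<Delta> (\<sigma> i))) (map (bt \<Delta>) Ms)"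
    using DLab by simp
  from bt_DLab_csub[OF DLab.prems(1,2) this] show ?case
    by simp
qed auto

lemma bt_dinst:
  "wfL \<Delta> \<Longrightarrow> labels_ok \<Delta> t \<Longrightarrow> \<forall>u\<in>set ts. labels_ok \<Delta> u \<Longrightarrow>
   bt \<Delta> (dinst ts t) = cinst (map (bt \<Delta>) ts) (bt \<Delta> t)"
proof -
  assume "wfL \<Delta>" "labels_ok \<Delta> t" "\<forall>u\<in>set ts. labels_ok \<Delta> u"
  moreover have "(\<lambda>i. bt \<Delta> (dinstf ts i)) = cinstf (map (bt \<Delta>) ts)"
    by (auto simp: dinstf_def cinstf_def)
  ultimately show ?thesis
    unfolding dinst_def cinst_def by (subst bt_dsub) (auto simp: dinstf_def)
qed

lemma dstep_labels_ok: "dstep \<Delta> M N \<Longrightarrow> wfL \<Delta> \<Longrightarrow> labels_ok \<Delta> M \<Longrightarrow> labels_ok \<Delta> N"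
proof (induction rule: dstep.induct)
  case (dbeta \<Delta> l As A L B \<Delta>' Ms N)
  note body = wfL_lookup_body[OF dbeta.prems(1) dbeta.hyps(1)]
  have "labels_ok \<Delta> L"
    using labels_ok_map_le[OF body(2,6)] .
  moreover have "\<forall>u\<in>set (N # rev Ms). labels_ok \<Delta> u"
    using dbeta.prems(2) by simp
  ultimately show ?case
    by (rule labels_ok_dinst)
next
  case (dlab i Ms \<Delta> M' l)
  then show ?case
    by (auto split: option.splits dest: set_update_subset_insert[THEN subsetD])
qed auto

lemma dstep_csteps_bt: "dstep \<Delta> M N \<Longrightarrow> wfL \<Delta> \<Longrightarrow> labels_ok \<Delta> M \<Longrightarrow> csteps (bt \<Delta> M) (bt \<Delta> N)"
proof (induction rule: dstep.induct)
  case (dbeta \<Delta> l As A L B \<Delta>' Ms N)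
  note body = wfL_lookup_body[OF dbeta.prems(1) dbeta.hyps(1)]
  define ts where "ts = rev (map (bt \<Delta>) Ms)"
  have "bt \<Delta> (dinst (N # rev Ms) L) = cinst (bt \<Delta> N # ts) (bt \<Delta> L)"
    using dbeta.prems labels_ok_map_le[OF body(2,6)] by (simp add: bt_dinst ts_def rev_map)
  also have "\<dots> = cinst [bt \<Delta> N] (csub (cup (cinstf ts)) (bt \<Delta>' L))"
    by (simp add: cinst_Cons bt_map_le[OF body(2,6)])
  finally have "cstep (bt \<Delta> (DApp (DLab l Ms) N)) (bt \<Delta> (dinst (N # rev Ms) L))"
    using dbeta.hyps(1) by (simp add: Let_def ts_def cbeta)
  then show ?case ..
next
  case (dlab i Ms \<Delta> M' l)
  then obtain As A L B \<Delta>' where lk: "lookup \<Delta> l = Some ((As, A, L, B), \<Delta>')"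
    by (auto split: option.splits)
  have "list_all2 csteps (rev (map (bt \<Delta>) Ms)) (rev (map (bt \<Delta>) (Ms[i := M'])))"
    using dlab by (auto intro!: list_all2_all_nthI simp: nth_list_update)
  then have "\<forall>j. csteps (cinstf (rev (map (bt \<Delta>) Ms)) j) (cinstf (rev (map (bt \<Delta>) (Ms[i := M']))) j)"
    using csteps_cinstf by blast
  then show ?case
    using lk by (simp add: Let_def cinst_def csteps_CLam csteps_csub csteps_cup)
qed (auto intro: csteps_CPi csteps_CApp)

theorem lemma3p20:
  assumes "dtyp \<Delta> \<Gamma> M A"
    and "dsteps \<Delta> M N"
  shows "csteps (bt \<Delta> M) (bt \<Delta> N)"
proof -
  from dtyp_dclosed_labels_ok[OF assms(1)] have "wfL \<Delta>" and "labels_ok \<Delta> M"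
    by auto
  from assms(2) have "csteps (bt \<Delta> M) (bt \<Delta> N) \<and> labels_ok \<Delta> N"
  proof (induction rule: rtranclp_induct)
    case base
    with \<open>labels_ok \<Delta> M\<close> show ?case by simp
  next
    case (step N N')
    with \<open>wfL \<Delta>\<close> show ?case
      by (auto intro: rtranclp_trans dstep_csteps_bt dstep_labels_ok)
  qed
  then show ?thesis ..
qed

end
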